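(* Let $P=(P;\tau,\le,\zeta)$ be a $pm$-space of height at most $1$ and let $X\subseteq P$ be a clopen decreasing set, regarded as an element of the dual algebra $E(P)$. Then for every $n<\omega$, $$X^{n(\prime\ast)}=\{x\in P:\ \ell(x,P\setminus X)>n\}\ \text{ if $n$ is even},\qquad X^{n(\prime\ast)}=\{x\in P:\ \ell(x,\zeta(P\setminus X))>n\}\ \text{ if $n$ is odd}.$$ Moreover, for $x\in P$, $\ell(x,P\setminus X)$ is infinite if and only if $Q_x\subseteq X$, and $\ell(x,\zeta(P\setminus X))$ is infinite if and only if $\zeta(Q_x)\subseteq X$.
   Context: A $pm$-space is $(P;\tau,\le,\zeta)$ where $(P;\tau,\le)$ is a Priestley space, $[X)$ is clopen for every clopen decreasing $X$, and $\zeta$ is a continuous order-reversing involution. Its dual algebra $E(P)$ consists of the clopen decreasing subsets of $P$ with $\cap,\cup,\emptyset,P$, $X^\ast=P\setminus[X)$ and $X'=P\setminus\zeta(X)$. For an element $x$ of a $pm$-algebra, $x^{0(\prime\ast)}=x$ and $x^{(k+1)(\prime\ast)}=((x^{k(\prime\ast)})')^\ast$. For $x,y\in P$, $\ell(x,y)$ is $0$ if $x=y$, otherwise the length of a shortest path from $x$ to $y$ in the comparability graph of $(P;\le)$ (vertices $P$, edges between distinct comparable elements), and $\ell(x,y)=\infty$ if there is no such path; $\infty>n$ for all $n<\omega$. For $A\subseteq P$, $\ell(x,A)=\min\{\ell(x,y):y\in A\}$ if $A\neq\emptyset$ and $\ell(x,\emptyset)=\infty$. An order component is a maximal subset of $P$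 in which all distances are finite; $Q_x$ is the order component containing $x$. *)

theory Defs
  imports "HOL-Analysis.Analysis" "HOL-Library.Extended_Nat"
begin

definition partial_order_on_set :: "'a set \<Rightarrow> ('a \<Rightarrow> 'a \<Rightarrow> bool) \<Rightarrow> bool" where
  "partial_order_on_set P le \<longleftrightarrow>
     (\<forall>x\<in>P. le x x) \<and>
     (\<forall>x\<in>P. \<forall>y\<in>P. le x y \<and> le y x \<longrightarrow> x = y) \<and>
     (\<forall>x\<in>P. \<forall>y\<in>P. \<forall>z\<in>P. le x y \<and> le y z \<longrightarrow> le x z)"

definition clopenin :: "'a topology \<Rightarrow> 'a set \<Rightarrow> bool" where
  "clopenin T U \<longleftrightarrow> openin T U \<and> closedin T U"

definition decreasing :: "'a set \<Rightarrow> ('a \<Rightarrow> 'a \<Rightarrow> bool) \<Rightarrow> 'a set \<Rightarrow> bool" where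
  "decreasing P le U \<longleftrightarrow> U \<subseteq> P \<and> (\<forall>x\<in>U. \<forall>y\<in>P. le y x \<longrightarrow> y \<in> U)"

definition increasing :: "'a set \<Rightarrow> ('a \<Rightarrow> 'a \<Rightarrow> bool) \<Rightarrow> 'a set \<Rightarrow> bool" where
  "increasing P le U \<longleftrightarrow> U \<subseteq> P \<and> (\<forall>x\<in>U. \<forall>y\<in>P. le x y \<longrightarrow> y \<in> U)"

definition upset :: "'a set \<Rightarrow> ('a \<Rightarrow> 'a \<Rightarrow> bool) \<Rightarrow> 'a set \<Rightarrow> 'a set" where
  "upset P le X = {y\<in>P. \<exists>x\<in>X. le x y}"

definition priestley_space :: "'a topology \<Rightarrow> ('a \<Rightarrow> 'a \<Rightarrow> bool) \<Rightarrow> bool" where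
  "priestley_space T le \<longleftrightarrow>
     compact_space T \<and> partial_order_on_set (topspace T) le \<and>
     (\<forall>x\<in>topspace T. \<forall>y\<in>topspace T. \<not> le x y \<longrightarrow>
        (\<exists>U. clopenin T U \<and> increasing (topspace T) le U \<and> x \<in> U \<and> y \<notin> U))"

definition pm_space :: "'a topology \<Rightarrow> ('a \<Rightarrow> 'a \<Rightarrow> bool) \<Rightarrow> ('a \<Rightarrow> 'a) \<Rightarrow> bool" where
  "pm_space T le zeta \<longleftrightarrow>
     priestley_space T le \<and>
     (\<forall>X. clopenin T X \<and> decreasing (topspace T) le X \<longrightarrow> clopenin T (upset (topspace T) le X)) \<and>
     continuous_map T T zeta \<and>
     (\<forall>x\<in>topspace T. \<forall>y\<in>topspace T. le x y \<longrightarrow> le (zeta y) (zeta x)) \<and>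
     (\<forall>x\<in>topspace T. zeta (zeta x) = x)"

definition height_le_1 :: "'a set \<Rightarrow> ('a \<Rightarrow> 'a \<Rightarrow> bool) \<Rightarrow> bool" where
  "height_le_1 P le \<longleftrightarrow>
     \<not> (\<exists>x\<in>P. \<exists>y\<in>P. \<exists>z\<in>P. le x y \<and> x \<noteq> y \<and> le y z \<and> y \<noteq> z)"

definition pstar :: "'a set \<Rightarrow> ('a \<Rightarrow> 'a \<Rightarrow> bool) \<Rightarrow> 'a set \<Rightarrow> 'a set" where
  "pstar P le X = P - upset P le X"

definition pprime :: "'a set \<Rightarrow> ('a \<Rightarrow> 'a) \<Rightarrow> 'a set \<Rightarrow> 'a set" where
  "pprime P zeta X = P - zeta ` X"

fun prime_star_iter :: "'a set \<Rightarrow> ('a \<Rightarrow> 'a \<Rightarrow> bool) \<Rightarrow> ('a \<Rightarrow> 'a) \<Rightarrow> nat \<Rightarrow> 'a set \<Rightarrow> 'a set" where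
  "prime_star_iter P le zeta 0 X = X"
| "prime_star_iter P le zeta (Suc k) X = pstar P le (pprime P zeta (prime_star_iter P le zeta k X))"

definition comparable_edge :: "('a \<Rightarrow> 'a \<Rightarrow> bool) \<Rightarrow> 'a \<Rightarrow> 'a \<Rightarrow> bool" where
  "comparable_edge le a b \<longleftrightarrow> a \<noteq> b \<and> (le a b \<or> le b a)"

definition comp_path :: "'a set \<Rightarrow> ('a \<Rightarrow> 'a \<Rightarrow> bool) \<Rightarrow> nat \<Rightarrow> 'a \<Rightarrow> 'a \<Rightarrow> bool" where
  "comp_path P le k x y \<longleftrightarrow>
     (\<exists>f :: nat \<Rightarrow> 'a. f 0 = x \<and> f k = y \<and> (\<forall>i\<le>k. f i \<in> P) \<and>
        (\<forall>i<k. comparable_edge le (f i) (f (Suc i))))"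

definition odist :: "'a set \<Rightarrow> ('a \<Rightarrow> 'a \<Rightarrow> bool) \<Rightarrow> 'a \<Rightarrow> 'a \<Rightarrow> enat" where
  "odist P le x y =
     (if x = y then 0
      else if \<exists>k. comp_path P le k x y then enat (LEAST k. comp_path P le k x y)
      else \<infinity>)"

definition odist_set :: "'a set \<Rightarrow> ('a \<Rightarrow> 'a \<Rightarrow> bool) \<Rightarrow> 'a \<Rightarrow> 'a set \<Rightarrow> enat" where
  "odist_set P le x A = (if A = {} then \<infinity> else (INF y\<in>A. odist P le x y))"

definition order_component :: "'a set \<Rightarrow> ('a \<Rightarrow> 'a \<Rightarrow> bool) \<Rightarrow> 'a \<Rightarrow> 'a set" where
  "order_component P le x = {y\<in>P. odist P le x y < \<infinity>}"

end

theory Submission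
  imports Defs
begin

text \<open>
  Let \<open>B\<^sub>n\<close> (\<open>shifted_complement n\<close>) be \<open>P - X\<close> for even \<open>n\<close> and \<open>\<zeta>(P - X)\<close> for odd \<open>n\<close>,
  so that \<open>B\<^sub>n\<^sub>+\<^sub>1 = \<zeta>(B\<^sub>n)\<close>; \<open>B\<^sub>n\<close> is increasing for even and decreasing for odd \<open>n\<close>.
  Unfolding the operations, \<open>x \<in> X\<^sup>n\<^sup>+\<^sup>1\<close> iff every \<open>w \<le> x\<close> satisfies \<open>\<zeta> w \<in> X\<^sup>n\<close>, i.e.
  (inductively, and because \<open>\<zeta>\<close> is an automorphism of the comparability graph)
  \<open>\<ell>(w, B\<^sub>n\<^sub>+\<^sub>1) > n\<close>. It remains to see that \<open>\<ell>(x, B\<^sub>n\<^sub>+\<^sub>1) \<le> n + 1\<close> forces some \<open>w \<le> x\<close>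
  with \<open>\<ell>(w, B\<^sub>n\<^sub>+\<^sub>1) \<le> n\<close>. Take a path of length \<open>n + 1\<close> from \<open>x\<close> into \<open>B\<^sub>n\<^sub>+\<^sub>1\<close>: if its
  first step goes down, its second vertex is such a \<open>w\<close>. Otherwise, by height \<open>\<le> 1\<close>,
  the path zigzags up and down, and its last step points in the direction in which
  \<open>B\<^sub>n\<^sub>+\<^sub>1\<close> is closed, so the path already enters \<open>B\<^sub>n\<^sub>+\<^sub>1\<close> one step earlier and
  \<open>w = x\<close> works.
\<close>

section \<open>Paths in the comparability graph\<close>

lemma comp_path_0_iff: "comp_path P le 0 x y \<longleftrightarrow> x = y \<and> x \<in> P"
  unfolding comp_path_def by (rule iffI) (auto intro!: exI[of _ "\<lambda>_. x"])

lemma comp_path_Cons: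
  assumes "x \<in> P" "comparable_edge le x w" "comp_path P le k w y"
  shows "comp_path P le (Suc k) x y"
proof -
  obtain f where f: "f 0 = w" "f k = y" "\<forall>i\<le>k. f i \<in> P"
    "\<forall>i<k. comparable_edge le (f i) (f (Suc i))"
    using assms(3) unfolding comp_path_def by blast
  define g where "g i = (if i = 0 then x else f (i - 1))" for i
  have "\<forall>i\<le>Suc k. g i \<in> P"
    using f assms(1) by (auto simp: g_def)
  moreover have "\<forall>i<Suc k. comparable_edge le (g i) (g (Suc i))"
  proof (intro allI impI)
    fix i assume "i < Suc k"
    then show "comparable_edge le (g i) (g (Suc i))"
      using f assms(2) by (cases i) (auto simp: g_def)
  qed
  ultimately show ?thesis
    using f unfolding comp_path_def by (auto simp: g_def intro!: exI[of _ g])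
qed

lemma odist_le_enat_iff:
  assumes "x \<in> P"
  shows "odist P le x y \<le> enat n \<longleftrightarrow> (\<exists>k\<le>n. comp_path P le k x y)"
proof (cases "x = y")
  case True
  then show ?thesis
    using assms by (auto simp: odist_def comp_path_0_iff zero_enat_def intro!: exI[of _ 0])
next
  case False
  show ?thesis
  proof (cases "\<exists>k. comp_path P le k x y")
    case True
    then have "comp_path P le (LEAST k. comp_path P le k x y) x y"
      by (rule LeastI_ex)
    then show ?thesis
      using True \<open>x \<noteq> y\<close> by (auto simp: odist_def intro: Least_le order_trans)
  next
    case False
    then show ?thesis using \<open>x \<noteq> y\<close> by (simp add: odist_def)
  qed
qed

lemma odist_less_infinity_iff:
  assumes "x \<in> P"
  shows "odist P le x y < \<infinity> \<longleftrightarrow> (\<exists>k. comp_path P le k x y)"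
proof -
  have "odist P le x y < \<infinity> \<longleftrightarrow> (\<exists>n. odist P le x y \<le> enat n)"
    by (cases "odist P le x y") auto
  then show ?thesis
    using odist_le_enat_iff[OF assms, of le y] by (meson order_refl)
qed

definition reaches_within :: "'a set \<Rightarrow> ('a \<Rightarrow> 'a \<Rightarrow> bool) \<Rightarrow> nat \<Rightarrow> 'a \<Rightarrow> 'a set \<Rightarrow> bool" where
  "reaches_within P le n x A \<longleftrightarrow> (\<exists>y\<in>A. \<exists>k\<le>n. comp_path P le k x y)"

lemma odist_set_le_enat_iff:
  assumes "x \<in> P"
  shows "odist_set P le x A \<le> enat n \<longleftrightarrow> reaches_within P le n x A"
proof (cases "A = {}")
  case True
  then show ?thesis by (simp add: odist_set_def reaches_within_def)
next
  case False
  then obtain y0 where "y0 \<in> A" and y0: "odist_set P le x A = odist P le x y0"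
    unfolding odist_set_def by (metis ex_in_conv imageE imageI wellorder_InfI)
  show ?thesis
  proof
    assume "odist_set P le x A \<le> enat n"
    then show "reaches_within P le n x A"
      using \<open>y0 \<in> A\<close> y0 odist_le_enat_iff[OF assms] by (auto simp: reaches_within_def)
  next
    assume "reaches_within P le n x A"
    then obtain y where "y \<in> A" "odist P le x y \<le> enat n"
      using odist_le_enat_iff[OF assms] by (auto simp: reaches_within_def)
    then show "odist_set P le x A \<le> enat n"
      using False by (auto simp: odist_set_def intro: INF_lower2)
  qed
qed

lemma odist_set_eq_infinity_iff:
  assumes "x \<in> P" "A \<subseteq> P"
  shows "odist_set P le x A = \<infinity> \<longleftrightarrow> order_component P le x \<inter> A = {}"
proof -
  have "odist_set P le x A = \<infinity> \<longleftrightarrow> (\<forall>n. \<not> odist_set P le x A \<le> enat n)"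
    by (cases "odist_set P le x A") auto
  also have "\<dots> \<longleftrightarrow> (\<forall>y\<in>A. \<not> (\<exists>k. comp_path P le k x y))"
    unfolding odist_set_le_enat_iff[OF assms(1)] reaches_within_def by (meson order_refl)
  also have "\<dots> \<longleftrightarrow> order_component P le x \<inter> A = {}"
    using assms odist_less_infinity_iff[OF assms(1)] by (auto simp: order_component_def)
  finally show ?thesis .
qed

lemma order_component_subset: "order_component P le x \<subseteq> P"
  by (auto simp: order_component_def)

lemma odist_set_Diff_eq_infinity_iff:
  assumes "x \<in> P"
  shows "odist_set P le x (P - X) = \<infinity> \<longleftrightarrow> order_component P le x \<subseteq> X"
  using odist_set_eq_infinity_iff[OF assms Diff_subset] order_component_subset[of P le x] by auto

lemma reaches_within_Suc_of_lower:
  assumes "x \<in> P" "w \<in> P" "le w x" "reaches_within P le n w A"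
  shows "reaches_within P le (Suc n) x A"
proof (cases "w = x")
  case True
  then show ?thesis using assms(4) by (auto simp: reaches_within_def intro: le_SucI)
next
  case False
  then have "comparable_edge le x w" using assms(3) by (auto simp: comparable_edge_def)
  then show ?thesis
    using assms(4) comp_path_Cons[OF assms(1)] by (fastforce simp: reaches_within_def)
qed

section \<open>Posets of height at most one\<close>

locale height_one_poset =
  fixes P :: "'a set" and le :: "'a \<Rightarrow> 'a \<Rightarrow> bool"
  assumes refl: "\<And>x. x \<in> P \<Longrightarrow> le x x"
    and height: "height_le_1 P le"
begin

lemma no_proper_chain:
  assumes "a \<in> P" "b \<in> P" "c \<in> P" "le a b" "a \<noteq> b" "le b c" "b \<noteq> c"
  shows False
  using assms height unfolding height_le_1_def by blast

lemma comp_path_zigzag: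
  assumes f: "\<forall>i\<le>k. f i \<in> P" "\<forall>i<k. comparable_edge le (f i) (f (Suc i))"
    and up: "le (f 0) (f 1)"
    and "i < k"
  shows "if even i then le (f i) (f (Suc i)) else le (f (Suc i)) (f i)"
  using \<open>i < k\<close>
proof (induction i)
  case 0
  then show ?case using up by simp
next
  case (Suc i)
  have P: "f i \<in> P" "f (Suc i) \<in> P" "f (Suc (Suc i)) \<in> P"
    using f Suc.prems by auto
  have "comparable_edge le (f i) (f (Suc i))" "comparable_edge le (f (Suc i)) (f (Suc (Suc i)))"
    using f Suc.prems by auto
  then show ?case
    using Suc no_proper_chain[OF P] no_proper_chain[OF P(3,2,1)]
    by (auto simp: comparable_edge_def split: if_splits)
qed

lemma reaches_within_Suc_iff_lower:
  assumes x: "x \<in> P"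
    and closed: "even n \<Longrightarrow> decreasing P le A" "odd n \<Longrightarrow> increasing P le A"
  shows "reaches_within P le (Suc n) x A \<longleftrightarrow> (\<exists>w\<in>P. le w x \<and> reaches_within P le n w A)"
    (is "_ \<longleftrightarrow> ?lower")
proof
  show "?lower \<Longrightarrow> reaches_within P le (Suc n) x A"
    using reaches_within_Suc_of_lower[OF x] by blast
next
  assume reach: "reaches_within P le (Suc n) x A"
  obtain y k where y: "y \<in> A" "k \<le> Suc n" "comp_path P le k x y"
    using reach by (auto simp: reaches_within_def)
  show ?lower
  proof (cases "k \<le> n")
    case True
    then show ?lower using x y refl by (auto simp: reaches_within_def)
  next
    case False
    with y have "k = Suc n" by simp
    with y obtain f where f: "f 0 = x" "f (Suc n) = y" "\<forall>i\<le>Suc n. f i \<in> P"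
      "\<forall>i<Suc n. comparable_edge le (f i) (f (Suc i))"
      unfolding comp_path_def by blast
    show ?lower
    proof (cases "le (f 1) x")
      case True
      have "comp_path P le n (f 1) y"
        using f unfolding comp_path_def by (intro exI[of _ "\<lambda>i. f (Suc i)"]) auto
      then show ?lower
        using True f y(1) by (auto simp: reaches_within_def)
    next
      case False
      then have "le (f 0) (f 1)"
        using f by (auto simp: comparable_edge_def)
      then have "if even n then le (f n) (f (Suc n)) else le (f (Suc n)) (f n)"
        using comp_path_zigzag[OF f(3,4)] by blast
      then have "f n \<in> A"
        using closed f y(1) by (auto simp: decreasing_def increasing_def split: if_splits)
      moreover have "comp_path P le n x (f n)"
        using f unfolding comp_path_def by (intro exI[of _ f]) auto
      ultimately show ?lower
        using x refl by (auto simp: reaches_within_def)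
    qed
  qed
qed

end

section \<open>Order-reversing involutions\<close>

lemma mem_pstar_pprime_iff:
  "x \<in> pstar P le (pprime P zeta S) \<longleftrightarrow> x \<in> P \<and> (\<forall>w\<in>P. le w x \<longrightarrow> w \<in> zeta ` S)"
  by (auto simp: pstar_def pprime_def upset_def)

locale height_one_involution = height_one_poset +
  fixes zeta :: "'a \<Rightarrow> 'a"
  assumes zeta_closed: "\<And>x. x \<in> P \<Longrightarrow> zeta x \<in> P"
    and zeta_antitone: "\<And>x y. x \<in> P \<Longrightarrow> y \<in> P \<Longrightarrow> le x y \<Longrightarrow> le (zeta y) (zeta x)"
    and zeta_zeta: "\<And>x. x \<in> P \<Longrightarrow> zeta (zeta x) = x"
begin

lemma mem_image_zeta_iff:
  assumes "S \<subseteq> P" "w \<in> P"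
  shows "w \<in> zeta ` S \<longleftrightarrow> zeta w \<in> S"
  using assms zeta_zeta by (metis image_iff subsetD)

lemma decreasing_image_zeta:
  assumes "increasing P le A"
  shows "decreasing P le (zeta ` A)"
  using assms zeta_closed zeta_antitone zeta_zeta
  unfolding decreasing_def increasing_def by (smt (verit) image_iff image_subset_iff subsetD)

lemma comp_path_zeta:
  assumes "comp_path P le k x y"
  shows "comp_path P le k (zeta x) (zeta y)"
proof -
  obtain f where f: "f 0 = x" "f k = y" "\<forall>i\<le>k. f i \<in> P"
    "\<forall>i<k. comparable_edge le (f i) (f (Suc i))"
    using assms unfolding comp_path_def by blast
  have "comparable_edge le (zeta (f i)) (zeta (f (Suc i)))" if "i < k" for i
    using f that zeta_antitone zeta_zeta unfolding comparable_edge_def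
    by (metis Suc_leI less_imp_le)
  then show ?thesis
    unfolding comp_path_def using f zeta_closed by (auto intro!: exI[of _ "zeta \<circ> f"])
qed

lemma reaches_within_zeta_iff:
  assumes "w \<in> P" "A \<subseteq> P"
  shows "reaches_within P le n (zeta w) A \<longleftrightarrow> reaches_within P le n w (zeta ` A)"
proof
  assume "reaches_within P le n (zeta w) A"
  then obtain y k where "y \<in> A" "k \<le> n" "comp_path P le k (zeta w) y"
    by (auto simp: reaches_within_def)
  then show "reaches_within P le n w (zeta ` A)"
    using comp_path_zeta[of k "zeta w" y] zeta_zeta[OF assms(1)]
    by (auto simp: reaches_within_def)
next
  assume "reaches_within P le n w (zeta ` A)"
  then obtain y k where "y \<in> A" "k \<le> n" "comp_path P le k w (zeta y)"
    by (auto simp: reaches_within_def)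
  moreover have "zeta (zeta y) = y"
    using \<open>y \<in> A\<close> assms(2) zeta_zeta by blast
  ultimately show "reaches_within P le n (zeta w) A"
    using comp_path_zeta[of k w "zeta y"] by (auto simp: reaches_within_def)
qed

lemma odist_set_image_zeta_eq_infinity_iff:
  assumes "x \<in> P"
  shows "odist_set P le x (zeta ` (P - X)) = \<infinity> \<longleftrightarrow> zeta ` order_component P le x \<subseteq> X"
proof -
  have "zeta ` (P - X) \<subseteq> P"
    using zeta_closed by (simp add: image_subset_iff)
  then have "odist_set P le x (zeta ` (P - X)) = \<infinity> \<longleftrightarrow>
      order_component P le x \<inter> zeta ` (P - X) = {}"
    by (rule odist_set_eq_infinity_iff[OF assms])
  also have "\<dots> \<longleftrightarrow> zeta ` order_component P le x \<subseteq> X"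
    using mem_image_zeta_iff[of "P - X"] order_component_subset[of P le x] zeta_closed by blast
  finally show ?thesis .
qed

context
  fixes X :: "'a set"
  assumes X_decreasing: "decreasing P le X"
begin

definition shifted_complement :: "nat \<Rightarrow> 'a set" where
  "shifted_complement n = (if even n then P - X else zeta ` (P - X))"

lemma shifted_complement_subset: "shifted_complement n \<subseteq> P"
  unfolding shifted_complement_def using zeta_closed by auto

lemma shifted_complement_Suc: "shifted_complement (Suc n) = zeta ` shifted_complement n"
proof -
  have "zeta ` zeta ` (P - X) = P - X"
    using zeta_zeta by (force simp: image_image)
  then show ?thesis unfolding shifted_complement_def by auto
qed

lemma increasing_shifted_complement: "even n \<Longrightarrow> increasing P le (shifted_complement n)"
  using X_decreasing unfolding shifted_complement_def decreasing_def increasing_def by auto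

lemma decreasing_shifted_complement: "odd n \<Longrightarrow> decreasing P le (shifted_complement n)"
  using decreasing_image_zeta[OF increasing_shifted_complement[of 0]]
  by (simp add: shifted_complement_def)

lemma prime_star_iter_eq:
  "prime_star_iter P le zeta n X =
     {x\<in>P. \<not> reaches_within P le n x (shifted_complement n)}"
proof (induction n)
  case 0
  show ?case
    using X_decreasing
    by (auto simp: shifted_complement_def reaches_within_def comp_path_0_iff decreasing_def)
next
  case (Suc n)
  let ?S = "prime_star_iter P le zeta n X" and ?B = "shifted_complement (Suc n)"
  have lower: "w \<in> zeta ` ?S \<longleftrightarrow> \<not> reaches_within P le n w ?B" if "w \<in> P" for w
  proof -
    have "w \<in> zeta ` ?S \<longleftrightarrow> zeta w \<in> ?S"
      using Suc.IH that by (intro mem_image_zeta_iff) auto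
    also have "\<dots> \<longleftrightarrow> \<not> reaches_within P le n (zeta w) (shifted_complement n)"
      using Suc.IH zeta_closed[OF that] by simp
    also have "\<dots> \<longleftrightarrow> \<not> reaches_within P le n w ?B"
      using reaches_within_zeta_iff[OF that shifted_complement_subset]
      by (simp add: shifted_complement_Suc)
    finally show ?thesis .
  qed
  have closed: "even n \<Longrightarrow> decreasing P le ?B" "odd n \<Longrightarrow> increasing P le ?B"
    by (simp_all add: decreasing_shifted_complement increasing_shifted_complement)
  show ?case
  proof (rule set_eqI)
    fix x
    have "x \<in> prime_star_iter P le zeta (Suc n) X \<longleftrightarrow>
          x \<in> P \<and> (\<forall>w\<in>P. le w x \<longrightarrow> \<not> reaches_within P le n w ?B)"
      using lower by (auto simp: mem_pstar_pprime_iff)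
    also have "\<dots> \<longleftrightarrow> x \<in> P \<and> \<not> reaches_within P le (Suc n) x ?B"
      using reaches_within_Suc_iff_lower[OF _ closed] by blast
    finally show "x \<in> prime_star_iter P le zeta (Suc n) X \<longleftrightarrow>
        x \<in> {x\<in>P. \<not> reaches_within P le (Suc n) x ?B}" by simp
  qed
qed

lemma prime_star_iter_eq_odist_set:
  "prime_star_iter P le zeta n X = {x\<in>P. enat n < odist_set P le x (shifted_complement n)}"
  using prime_star_iter_eq by (auto simp: odist_set_le_enat_iff not_le[symmetric])

end

end

lemma height_one_involution_if_pm_space:
  assumes "pm_space T le zeta" and "height_le_1 (topspace T) le"
  shows "height_one_involution (topspace T) le zeta"
proof -
  have po: "partial_order_on_set (topspace T) le" and cont: "continuous_map T T zeta"
    and antitone: "\<forall>x\<in>topspace T. \<forall>y\<in>topspace T. le x y \<longrightarrow> le (zeta y) (zeta x)"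
    and involution: "\<forall>x\<in>topspace T. zeta (zeta x) = x"
    using assms(1) unfolding pm_space_def priestley_space_def by auto
  show ?thesis
  proof
    show "le x x" if "x \<in> topspace T" for x
      using po that unfolding partial_order_on_set_def by blast
    show "zeta x \<in> topspace T" if "x \<in> topspace T" for x
      using continuous_map_image_subset_topspace[OF cont] that by blast
  qed (use assms(2) antitone involution in blast)+
qed

theorem lemma3p2:
  fixes T :: "'a topology" and le :: "'a \<Rightarrow> 'a \<Rightarrow> bool" and zeta :: "'a \<Rightarrow> 'a"
    and X :: "'a set"
  assumes "pm_space T le zeta"
    and "height_le_1 (topspace T) le"
    and "clopenin T X" and "decreasing (topspace T) le X"
  shows "(\<forall>n::nat.
            prime_star_iter (topspace T) le zeta n X =
              (if even n
               then {x\<in>topspace T. odist_set (topspace T) le x (topspace T - X) > enat n}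
               else {x\<in>topspace T. odist_set (topspace T) le x (zeta ` (topspace T - X)) > enat n}))
       \<and> (\<forall>x\<in>topspace T.
            (odist_set (topspace T) le x (topspace T - X) = \<infinity>
               \<longleftrightarrow> order_component (topspace T) le x \<subseteq> X)
          \<and> (odist_set (topspace T) le x (zeta ` (topspace T - X)) = \<infinity>
               \<longleftrightarrow> zeta ` order_component (topspace T) le x \<subseteq> X))"
proof -
  interpret height_one_involution "topspace T" le zeta
    using assms(1,2) by (rule height_one_involution_if_pm_space)
  show ?thesis
    by (simp add: prime_star_iter_eq_odist_set[OF assms(4)] shifted_complement_def[OF assms(4)]
        odist_set_Diff_eq_infinity_iff odist_set_image_zeta_eq_infinity_iff)
qed

end
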